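(* Assume $\langle f\rangle_X=0$ and that $\psi$ satisfies (A1) and (A2). Then a function $u^H\in U^H_\#$ solves the HQC problem if and only if \[ \langle\psi^0_{\rm coll}Du^H,Dv^H\rangle_X=\langle f,v^H\rangle_X\quad\text{for all }v^H\in U^H_\#, \] where $\psi^0_{\rm coll}(X_i)=\psi^0(X_{i_k^{\rm coll}})$ for $X_i\in S_k$.
   Context: Let $\epsilon>0$, $N,p$ positive integers with normalization $N\epsilon=1$; $X_i=\epsilon i$, $Y_j=j$. $U^N_{\rm per}(\epsilon\mathbb Z)$: functions $u:\epsilon\mathbb Z\to\mathbb R$ with $u(X_{i+N})=u(X_i)$; $U^N_\#(\epsilon\mathbb Z)$: those with $\langle u\rangle_X:=\frac1N\sum_{i=1}^Nu(X_i)=0$. $\langle u,v\rangle_X=\frac1N\sum_{i=1}^Nu(X_i)v(X_i)$, $Du(X_i)=(u(X_{i+1})-u(X_i))/\epsilon$. $U^p_\#(\epsilon\mathbb Z)$: $p$-periodic functions on $\epsilon\mathbb Z$ with $\sum_{i=1}^pw(X_i)=0$. Two-scale functions $g:\epsilon\mathbb Z\times\mathbb Z\to\mathbb R$ satisfy $g(X_{i+N},Y_j)=g(X_i,Y_j)=g(X_i,Y_{j+p})$; $D_Xg(X_i,Y_j)=(g(X_{i+1},Y_j)-g(X_i,Y_j))/\epsilon$, $\|g\|_{L^\infty(N,p)}=\max_{1\le i\le N,1\le j\le p}|g|$. $\psi$ is a two-scale function with (A1) $0<c_\psi\le\psi\le C_\psi$ and (A2) $\|D_X\psi\|_{L^\infty(N,p)}\le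 C'_\psi$; $\psi^0(X_i)=(\frac1p\sum_{j=1}^p1/\psi(X_i,Y_j))^{-1}$. $f\in U^N_{\rm per}(\epsilon\mathbb Z)$. HQC method: indices $1=i_1<\dots<i_K\le N$, $i_{K+1}=N+1$, $S_k=\{X_i:i_k\le i<i_{k+1}\}$, $H_k=\epsilon(i_{k+1}-i_k)$. $U^H_{\rm per}$: $v\in U^N_{\rm per}(\epsilon\mathbb Z)$ affine on each $\{X_i:i_k\le i\le i_{k+1}\}$; $U^H_\#=U^H_{\rm per}\cap U^N_\#(\epsilon\mathbb Z)$. Sampling domains $S_k^{\rm rep}=\{X_i:i_k^{\rm rep}\le i<i_k^{\rm rep}+p\}\subset S_k$, collocation indices with $X_{i_k^{\rm coll}}\in S_k^{\rm rep}$, $\psi^\epsilon_{{\rm coll},k}(X_i)=\psi(X_{i_k^{\rm coll}},X_i/\epsilon)$, $\langle a,b\rangle_{S_k^{\rm rep}}=\frac1p\sum_{X_i\in S_k^{\rm rep}}a(X_i)b(X_i)$. For $v^H\in U^H_{\rm per}$ let $\ell_k$ be the affine function on $\epsilon\mathbb Z$ equal to $v^H$ on $S_k$; $\mathcal R_k(v^H)=\ell_k+w$ with $w\in U^p_\#(\epsilon\mathbb Z)$ such that $\langle\psi^\epsilon_{{\rm coll},k}D(\ell_k+w),Ds\rangle_{S_k^{\rm rep}}=0$ for all $s\in U^p_\#(\epsilon\mathbb Z)$. HQC problem: $u^H\in U^H_\#$ with $\sum_{k=1}^KH_k\langle\psi^\epsilon_{{\rm coll},k}D\mathcal R_k(u^H),D\mathcal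 R_k(v^H)\rangle_{S_k^{\rm rep}}=\langle f,v^H\rangle_X$ for all $v^H\in U^H_\#$. *)

theory Defs
  imports Complex_Main
begin

text \<open>Grid functions on eps*Z are represented by their values at the grid
  indices: u :: int => real, with u i standing for u(X_i), X_i = eps*i.
  Two-scale functions g(X_i,Y_j) are represented as g :: int => int => real.\<close>

definition per :: "nat \<Rightarrow> (int \<Rightarrow> real) \<Rightarrow> bool" where
  "per n u \<longleftrightarrow> (\<forall>i. u (i + int n) = u i)"

definition meanX :: "nat \<Rightarrow> (int \<Rightarrow> real) \<Rightarrow> real" where
  "meanX N u = (1 / real N) * (\<Sum>i\<in>{1..int N}. u i)"

definition ipX :: "nat \<Rightarrow> (int \<Rightarrow> real) \<Rightarrow> (int \<Rightarrow> real) \<Rightarrow> real" where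
  "ipX N u v = (1 / real N) * (\<Sum>i\<in>{1..int N}. u i * v i)"

definition Dop :: "real \<Rightarrow> (int \<Rightarrow> real) \<Rightarrow> int \<Rightarrow> real" where
  "Dop eps u = (\<lambda>i. (u (i + 1) - u i) / eps)"

definition Usharp_p :: "nat \<Rightarrow> (int \<Rightarrow> real) \<Rightarrow> bool" where
  "Usharp_p p w \<longleftrightarrow> per p w \<and> (\<Sum>i\<in>{1..int p}. w i) = 0"

definition UH_per :: "real \<Rightarrow> nat \<Rightarrow> nat \<Rightarrow> (nat \<Rightarrow> int) \<Rightarrow> (int \<Rightarrow> real) \<Rightarrow> bool" where
  "UH_per eps N K idx v \<longleftrightarrow> per N v \<and>
     (\<forall>k\<in>{1..K}. \<exists>a b. \<forall>i\<in>{idx k..idx (Suc k)}. v i = a + b * (eps * of_int i))"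

definition UH_sharp :: "real \<Rightarrow> nat \<Rightarrow> nat \<Rightarrow> (nat \<Rightarrow> int) \<Rightarrow> (int \<Rightarrow> real) \<Rightarrow> bool" where
  "UH_sharp eps N K idx v \<longleftrightarrow> UH_per eps N K idx v \<and> meanX N v = 0"

text \<open>The affine function ell_k on eps*Z coinciding with v^H on S_k
  (the affine piece of v^H on {X_i : i_k <= i <= i_(k+1)}).\<close>
definition ellk :: "real \<Rightarrow> (nat \<Rightarrow> int) \<Rightarrow> (int \<Rightarrow> real) \<Rightarrow> nat \<Rightarrow> int \<Rightarrow> real" where
  "ellk eps idx v k = (\<lambda>i. v (idx k) +
      (v (idx (Suc k)) - v (idx k)) / (eps * of_int (idx (Suc k) - idx k))
        * (eps * of_int i - eps * of_int (idx k)))"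

definition ip_rep :: "nat \<Rightarrow> (nat \<Rightarrow> int) \<Rightarrow> nat \<Rightarrow> (int \<Rightarrow> real) \<Rightarrow> (int \<Rightarrow> real) \<Rightarrow> real" where
  "ip_rep p irep k a b = (1 / real p) * (\<Sum>i\<in>{irep k..<irep k + int p}. a i * b i)"

text \<open>psi^eps_{coll,k}(X_i) = psi(X_{icoll k}, X_i/eps) = psi(X_{icoll k}, Y_i).\<close>
definition psi_coll :: "(int \<Rightarrow> int \<Rightarrow> real) \<Rightarrow> (nat \<Rightarrow> int) \<Rightarrow> nat \<Rightarrow> int \<Rightarrow> real" where
  "psi_coll psi icoll k = (\<lambda>i. psi (icoll k) i)"

definition cellsol :: "real \<Rightarrow> nat \<Rightarrow> (nat \<Rightarrow> int) \<Rightarrow> (int \<Rightarrow> int \<Rightarrow> real) \<Rightarrow> (nat \<Rightarrow> int)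
     \<Rightarrow> nat \<Rightarrow> (int \<Rightarrow> real) \<Rightarrow> (int \<Rightarrow> real) \<Rightarrow> bool" where
  "cellsol eps p irep psi icoll k l w \<longleftrightarrow> Usharp_p p w \<and>
     (\<forall>s. Usharp_p p s \<longrightarrow>
        ip_rep p irep k (\<lambda>i. psi_coll psi icoll k i * Dop eps (\<lambda>j. l j + w j) i) (Dop eps s) = 0)"

definition Rk :: "real \<Rightarrow> nat \<Rightarrow> (nat \<Rightarrow> int) \<Rightarrow> (nat \<Rightarrow> int) \<Rightarrow> (int \<Rightarrow> int \<Rightarrow> real)
     \<Rightarrow> (nat \<Rightarrow> int) \<Rightarrow> nat \<Rightarrow> (int \<Rightarrow> real) \<Rightarrow> int \<Rightarrow> real" where
  "Rk eps p idx irep psi icoll k v =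
     (\<lambda>i. ellk eps idx v k i + (THE w. cellsol eps p irep psi icoll k (ellk eps idx v k) w) i)"

definition HQC_form :: "real \<Rightarrow> nat \<Rightarrow> nat \<Rightarrow> (nat \<Rightarrow> int) \<Rightarrow> (nat \<Rightarrow> int) \<Rightarrow> (int \<Rightarrow> int \<Rightarrow> real)
     \<Rightarrow> (nat \<Rightarrow> int) \<Rightarrow> (int \<Rightarrow> real) \<Rightarrow> (int \<Rightarrow> real) \<Rightarrow> real" where
  "HQC_form eps p K idx irep psi icoll u v =
     (\<Sum>k\<in>{1..K}. eps * of_int (idx (Suc k) - idx k) *
        ip_rep p irep k
          (\<lambda>i. psi_coll psi icoll k i * Dop eps (Rk eps p idx irep psi icoll k u) i)
          (Dop eps (Rk eps p idx irep psi icoll k v)))"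

definition psi0 :: "nat \<Rightarrow> (int \<Rightarrow> int \<Rightarrow> real) \<Rightarrow> int \<Rightarrow> real" where
  "psi0 p psi i = inverse ((1 / real p) * (\<Sum>j\<in>{1..int p}. 1 / psi i j))"

definition psi0coll :: "nat \<Rightarrow> nat \<Rightarrow> (nat \<Rightarrow> int) \<Rightarrow> (int \<Rightarrow> int \<Rightarrow> real) \<Rightarrow> (nat \<Rightarrow> int)
     \<Rightarrow> int \<Rightarrow> real" where
  "psi0coll p K idx psi icoll i =
     psi0 p psi (icoll (THE k. k \<in> {1..K} \<and> idx k \<le> i \<and> i < idx (Suc k)))"

end

theory Submission
  imports Defs
begin

text \<open>On a block S_k let q = \<psi>(X_coll, \<cdot>) and let s be the slope of v^H there. The cell
  problem is solved by the corrector w whose flux q D(\<ell>_k + w) is a constant c: a constant flux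
  is orthogonal to D s for every periodic s, because D s sums to zero over a period, and periodicity
  of w forces the mean of D(\<ell>_k + w) = c/q over a period to be s, i.e. c = \<psi>^0 s. Testing the
  difference of two solutions against itself shows that this corrector is the only one. Hence the
  block term of the HQC form is H_k \<psi>^0(X_coll) s_u s_v, the contribution of S_k to
  \<langle>\<psi>^0_coll D u^H, D v^H\<rangle>_X. By periodicity the position of the sampling window inside S_k is
  irrelevant.\<close>

lemma sum_int_window_step:
  "sum g {x..<x + int m} + g (x + int m) = g x + sum g {x + 1..<x + 1 + int m}"
proof -
  have A: "{x..<x + 1 + int m} = insert (x + int m) {x..<x + int m}" by auto
  have B: "{x..<x + 1 + int m} = insert x {x + 1..<x + 1 + int m}" by auto
  have "sum g {x..<x + 1 + int m} = g (x + int m) + sum g {x..<x + int m}" unfolding A by simp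
  moreover have "sum g {x..<x + 1 + int m} = g x + sum g {x + 1..<x + 1 + int m}" unfolding B by simp
  ultimately show ?thesis by (simp add: add.commute)
qed

lemma int_shift_invariant_const:
  fixes f :: "int \<Rightarrow> 'a"
  assumes "\<And>i. f (i + 1) = f i"
  shows "f i = f j"
proof -
  have "f i = f 0" for i
  proof (induction i rule: int_induct[where k=0])
    case (step2 i) then show ?case using assms[of "i - 1"] by simp
  qed (use assms in simp_all)
  then show ?thesis by metis
qed

lemma sum_per_window:
  assumes "per p g"
  shows "sum g {a..<a + int p} = sum g {b..<b + int p}"
proof -
  have "sum g {x + 1..<x + 1 + int p} = sum g {x..<x + int p}" for x
    using sum_int_window_step[of g x p] assms by (simp add: per_def)
  then show ?thesis by (rule int_shift_invariant_const[where f="\<lambda>x. sum g {x..<x + int p}"])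
qed

lemma per_mult_shift:
  assumes "per p g"
  shows "g (i + int p * q) = g i"
proof (induction q rule: int_induct[where k=0])
  case (step1 j)
  then show ?case using assms unfolding per_def by (metis add.assoc distrib_left mult.right_neutral)
next
  case (step2 j)
  then show ?case using assms unfolding per_def by (metis diff_add_cancel add.assoc distrib_left mult.right_neutral)
qed simp

lemma per_eq_0_if_window:
  assumes "per p g" "p > 0" "\<forall>i\<in>{a..<a + int p}. g i = 0"
  shows "g i = 0"
proof -
  define j where "j = a + (i - a) mod int p"
  have "i = j + int p * ((i - a) div int p)"
    unfolding j_def by (metis add.commute add.left_commute diff_add_cancel mod_mult_div_eq)
  moreover have "j \<in> {a..<a + int p}" unfolding j_def using assms(2) by simp
  ultimately show ?thesis using assms per_mult_shift by metis
qed

lemma sum_int_telescope: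
  fixes s :: "int \<Rightarrow> 'a::ab_group_add"
  shows "(\<Sum>i\<in>{a..<a + int m}. s (i + 1) - s i) = s (a + int m) - s a"
proof (induction m)
  case (Suc m)
  have "{a..<a + int (Suc m)} = insert (a + int m) {a..<a + int m}" by auto
  then show ?case using Suc by (simp add: algebra_simps)
qed simp

lemma Dop_add: "Dop eps (\<lambda>j. u j + w j) i = Dop eps u i + Dop eps w i"
  unfolding Dop_def add_divide_distrib[symmetric] by (simp add: algebra_simps)

lemma per_Dop: "per p u \<Longrightarrow> per p (Dop eps u)"
  unfolding per_def Dop_def by (metis add.commute add.assoc)

lemma sum_Dop_per_window:
  assumes "per p s"
  shows "(\<Sum>i\<in>{a..<a + int p}. Dop eps s i) = 0"
proof -
  have "(\<Sum>i\<in>{a..<a + int p}. Dop eps s i) = (s (a + int p) - s a) / eps"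
    unfolding Dop_def by (simp only: sum_divide_distrib[symmetric] sum_int_telescope)
  then show ?thesis using assms by (simp add: per_def)
qed

lemma per_antidifference:
  assumes "per p g" "sum g {1..int p} = 0"
  obtains W where "per p W" "\<And>i. W (i + 1) - W i = g i"
proof
  define W where "W i = sum g {0..<i} - sum g {i..<0}" for i
  show step: "W (i + 1) - W i = g i" for i
  proof (cases "i \<ge> 0")
    case True
    then have "{0..<i + 1} = insert i {0..<i}" by auto
    then show ?thesis using True unfolding W_def by simp
  next
    case False
    then have "{i..<0} = insert i {i + 1..<0}" "{0..<i + 1} = {}" "{0..<i} = {}" by auto
    then show ?thesis unfolding W_def by simp
  qed
  have "W (i + int p) - W i = sum g {i..<i + int p}" for i
    using sum_int_telescope[of W i p] step by simp
  also have "sum g {i..<i + int p} = sum g {1..int p}" for i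
  proof -
    have "{1..<1 + int p} = {1..int p}" by auto
    then show ?thesis using sum_per_window[OF assms(1), of i 1] by simp
  qed
  finally show "per p W" using assms(2) by (simp add: per_def)
qed

lemma Usharp_p_eq_0_if_Dop_window:
  assumes d: "Usharp_p p d" and p: "p > 0" and eps: "eps \<noteq> 0"
    and win: "\<forall>i\<in>{a..<a + int p}. Dop eps d i = 0"
  shows "d i = 0"
proof -
  have "Dop eps d i = 0" for i
    using per_eq_0_if_window[OF per_Dop p win] d unfolding Usharp_p_def by blast
  then have "d (i + 1) = d i" for i using eps by (simp add: Dop_def)
  then have const: "d i = d 0" for i by (rule int_shift_invariant_const[where f=d])
  then have "(\<Sum>i\<in>{1..int p}. d i) = (\<Sum>i\<in>{1..int p}. d 0)" by (intro sum.cong) simp_all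
  then have "(\<Sum>i\<in>{1..int p}. d i) = real p * d 0" by simp
  then show ?thesis using d p const unfolding Usharp_p_def by simp
qed

definition cell_solution ::
    "real \<Rightarrow> nat \<Rightarrow> int \<Rightarrow> (int \<Rightarrow> real) \<Rightarrow> (int \<Rightarrow> real) \<Rightarrow> (int \<Rightarrow> real) \<Rightarrow> bool" where
  "cell_solution eps p a q l w \<longleftrightarrow> Usharp_p p w \<and>
     (\<forall>s. Usharp_p p s \<longrightarrow> (\<Sum>i\<in>{a..<a + int p}. q i * Dop eps (\<lambda>j. l j + w j) i * Dop eps s i) = 0)"

definition harmonic_mean :: "nat \<Rightarrow> (int \<Rightarrow> real) \<Rightarrow> real" where
  "harmonic_mean p q = inverse (1 / real p * (\<Sum>j\<in>{1..int p}. 1 / q j))"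

lemma harmonic_mean_mult_sum_inverse:
  assumes "p > 0" "\<forall>j. q j > 0"
  shows "harmonic_mean p q * (\<Sum>j\<in>{1..int p}. 1 / q j) = real p"
proof -
  have "(\<Sum>j\<in>{1..int p}. 1 / q j) > 0" using assms by (intro sum_pos) auto
  then show ?thesis unfolding harmonic_mean_def by (simp add: field_simps)
qed

lemma cell_solution_if_constant_flux:
  assumes "Usharp_p p w" "\<forall>i. q i * Dop eps (\<lambda>j. l j + w j) i = c"
  shows "cell_solution eps p a q l w"
proof -
  have "(\<Sum>i\<in>{a..<a + int p}. q i * Dop eps (\<lambda>j. l j + w j) i * Dop eps s i) = 0"
    if "Usharp_p p s" for s
    using assms(2) sum_Dop_per_window[of p s] that
    by (simp add: Usharp_p_def sum_distrib_left[symmetric])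
  then show ?thesis using assms(1) unfolding cell_solution_def by blast
qed

lemma cell_solution_exists:
  assumes eps: "eps > 0" and p: "p > 0" and q: "per p q" "\<forall>i. q i > 0"
    and l: "\<forall>i. Dop eps l i = s"
  obtains w where "cell_solution eps p a q l w"
    and "\<forall>i. q i * Dop eps (\<lambda>j. l j + w j) i = harmonic_mean p q * s"
proof -
  define c where "c = harmonic_mean p q * s"
  define g where "g i = eps * (c / q i - s)" for i
  have "sum g {1..int p} = eps * (s * (harmonic_mean p q * (\<Sum>j\<in>{1..int p}. 1 / q j)) - real p * s)"
    unfolding g_def c_def by (simp add: sum_subtractf sum_distrib_left algebra_simps)
  then have "sum g {1..int p} = 0" using harmonic_mean_mult_sum_inverse[OF p q(2)] by simp
  moreover have "per p g" using q(1) by (simp add: per_def g_def)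
  ultimately obtain W where W: "per p W" "\<And>i. W (i + 1) - W i = g i"
    using per_antidifference by blast
  define w where "w i = W i - (\<Sum>j\<in>{1..int p}. W j) / real p" for i
  have "Usharp_p p w" using W(1) p by (simp add: Usharp_p_def per_def w_def sum_subtractf)
  moreover have "q i * Dop eps (\<lambda>j. l j + w j) i = c" for i
  proof -
    have "Dop eps w i = c / q i - s" using W(2)[of i] eps by (simp add: Dop_def w_def g_def)
    then show ?thesis using l q(2)[rule_format, of i] by (simp add: Dop_add field_simps)
  qed
  ultimately show ?thesis using that cell_solution_if_constant_flux unfolding c_def by blast
qed

lemma cell_solution_unique:
  assumes eps: "eps \<noteq> 0" and p: "p > 0" and q: "\<forall>i. q i > 0"
    and w: "cell_solution eps p a q l w" and w': "cell_solution eps p a q l w'"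
  shows "w = w'"
proof -
  define d where "d i = w' i - w i" for i
  have d: "Usharp_p p d"
    using w w' unfolding cell_solution_def Usharp_p_def per_def d_def by (simp add: sum_subtractf)
  have Dd: "Dop eps d i = Dop eps (\<lambda>j. l j + w' j) i - Dop eps (\<lambda>j. l j + w j) i" for i
    by (simp add: Dop_def d_def diff_divide_distrib[symmetric])
  have "q i * (Dop eps d i)\<^sup>2 = q i * Dop eps (\<lambda>j. l j + w' j) i * Dop eps d i
      - q i * Dop eps (\<lambda>j. l j + w j) i * Dop eps d i" for i
    by (simp only: power2_eq_square Dd) (simp add: algebra_simps)
  then have "(\<Sum>i\<in>{a..<a + int p}. q i * (Dop eps d i)\<^sup>2) =
      (\<Sum>i\<in>{a..<a + int p}. q i * Dop eps (\<lambda>j. l j + w' j) i * Dop eps d i)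
    - (\<Sum>i\<in>{a..<a + int p}. q i * Dop eps (\<lambda>j. l j + w j) i * Dop eps d i)"
    by (simp only: sum_subtractf)
  also have "\<dots> = 0" using w w' d unfolding cell_solution_def by simp
  moreover have "0 \<le> q i * (Dop eps d i)\<^sup>2" for i using q by (simp add: less_imp_le)
  ultimately have "\<forall>i\<in>{a..<a + int p}. q i * (Dop eps d i)\<^sup>2 = 0"
    by (simp add: sum_nonneg_eq_0_iff)
  then have "\<forall>i\<in>{a..<a + int p}. Dop eps d i = 0"
    using q by (metis less_irrefl mult_eq_0_iff power_eq_0_iff)
  then have "d i = 0" for i by (rule Usharp_p_eq_0_if_Dop_window[OF d p eps])
  then show ?thesis by (simp add: fun_eq_iff d_def)
qed

lemma cell_solution_flux:
  assumes "eps > 0" "p > 0" "per p q" "\<forall>i. q i > 0" "\<forall>i. Dop eps l i = s"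
    and "cell_solution eps p a q l w"
  shows "q i * Dop eps (\<lambda>j. l j + w j) i = harmonic_mean p q * s"
proof -
  obtain w0 where w0: "cell_solution eps p a q l w0"
    and flux: "\<forall>i. q i * Dop eps (\<lambda>j. l j + w0 j) i = harmonic_mean p q * s"
    using cell_solution_exists[OF assms(1-5)] .
  have "w0 = w" using assms(1) by (intro cell_solution_unique[OF _ assms(2,4) w0 assms(6)]) simp
  then show ?thesis using flux by simp
qed

lemma the_cell_solution:
  assumes "eps > 0" "p > 0" "per p q" "\<forall>i. q i > 0" "\<forall>i. Dop eps l i = s"
  shows "cell_solution eps p a q l (THE w. cell_solution eps p a q l w)"
proof -
  obtain w where w: "cell_solution eps p a q l w" using cell_solution_exists[OF assms] .
  have "\<exists>!w. cell_solution eps p a q l w"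
  proof (rule ex1I[where a=w])
    show "cell_solution eps p a q l w" by (rule w)
    show "w' = w" if "cell_solution eps p a q l w'" for w'
      using assms(1) by (intro cell_solution_unique[OF _ assms(2,4) that w]) simp
  qed
  then show ?thesis by (rule theI')
qed

lemma cellsol_eq_cell_solution:
  "p > 0 \<Longrightarrow> cellsol eps p irep psi icoll k = cell_solution eps p (irep k) (psi (icoll k))"
  by (auto simp: fun_eq_iff cellsol_def cell_solution_def ip_rep_def psi_coll_def)

lemma psi0_eq_harmonic_mean: "psi0 p psi i = harmonic_mean p (psi i)"
  by (simp add: psi0_def harmonic_mean_def)

definition block_slope :: "real \<Rightarrow> (nat \<Rightarrow> int) \<Rightarrow> (int \<Rightarrow> real) \<Rightarrow> nat \<Rightarrow> real" where
  "block_slope eps idx v k = (v (idx (Suc k)) - v (idx k)) / (eps * of_int (idx (Suc k) - idx k))"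

lemma Dop_ellk:
  assumes "eps \<noteq> 0"
  shows "Dop eps (ellk eps idx v k) i = block_slope eps idx v k"
proof -
  have ell: "ellk eps idx v k j = v (idx k) + block_slope eps idx v k * (eps * of_int j - eps * of_int (idx k))"
    for j by (simp add: ellk_def block_slope_def)
  have "ellk eps idx v k (i + 1) - ellk eps idx v k i = block_slope eps idx v k * eps"
    by (simp only: ell) (simp add: algebra_simps)
  then show ?thesis using assms by (simp add: Dop_def)
qed

lemma flux_Rk:
  assumes eps: "eps > 0" and p: "p > 0" and psi: "\<forall>i. per p (psi i)" "\<forall>i j. psi i j > 0"
  shows "psi (icoll k) i * Dop eps (Rk eps p idx irep psi icoll k v) i
    = psi0 p psi (icoll k) * block_slope eps idx v k"
proof -
  have q: "per p (psi (icoll k))" "\<forall>j. psi (icoll k) j > 0" using psi by simp_all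
  have ell: "\<forall>i. Dop eps (ellk eps idx v k) i = block_slope eps idx v k"
    using eps Dop_ellk by simp
  let ?l = "ellk eps idx v k"
  let ?w = "THE w. cell_solution eps p (irep k) (psi (icoll k)) ?l w"
  have Rk: "Rk eps p idx irep psi icoll k v = (\<lambda>j. ?l j + ?w j)"
    unfolding Rk_def cellsol_eq_cell_solution[OF p] ..
  have "cell_solution eps p (irep k) (psi (icoll k)) ?l ?w"
    by (rule the_cell_solution[OF eps p q ell])
  then have "psi (icoll k) i * Dop eps (\<lambda>j. ?l j + ?w j) i = harmonic_mean p (psi (icoll k)) * block_slope eps idx v k"
    by (rule cell_solution_flux[OF eps p q ell])
  then show ?thesis by (simp only: Rk psi0_eq_harmonic_mean)
qed

lemma ip_rep_Rk:
  assumes eps: "eps > 0" and p: "p > 0" and psi: "\<forall>i. per p (psi i)" "\<forall>i j. psi i j > 0"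
  shows "ip_rep p irep k (\<lambda>i. psi_coll psi icoll k i * Dop eps (Rk eps p idx irep psi icoll k u) i)
      (Dop eps (Rk eps p idx irep psi icoll k v))
    = psi0 p psi (icoll k) * block_slope eps idx u k * block_slope eps idx v k"
proof -
  let ?q = "psi (icoll k)" and ?h = "psi0 p psi (icoll k)"
  let ?su = "block_slope eps idx u k" and ?sv = "block_slope eps idx v k"
  have "Dop eps (Rk eps p idx irep psi icoll k v) i = ?h * ?sv * (1 / ?q i)" for i
  proof -
    have "?q i \<noteq> 0" using psi(2) by (metis less_irrefl)
    then show ?thesis using flux_Rk[OF assms, of icoll k i idx irep v] by (simp add: field_simps)
  qed
  then have "ip_rep p irep k (\<lambda>i. psi_coll psi icoll k i * Dop eps (Rk eps p idx irep psi icoll k u) i)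
      (Dop eps (Rk eps p idx irep psi icoll k v))
    = 1 / real p * (?h * ?su * ?h * ?sv * (\<Sum>i\<in>{irep k..<irep k + int p}. 1 / ?q i))"
    unfolding ip_rep_def psi_coll_def flux_Rk[OF assms]
    by (simp add: sum_distrib_left mult.assoc)
  also have "(\<Sum>i\<in>{irep k..<irep k + int p}. 1 / ?q i) = (\<Sum>j\<in>{1..int p}. 1 / ?q j)"
  proof -
    have "per p (\<lambda>i. 1 / ?q i)" using psi(1) by (simp add: per_def)
    then have "(\<Sum>i\<in>{irep k..<irep k + int p}. 1 / ?q i) = (\<Sum>j\<in>{1..<1 + int p}. 1 / ?q j)"
      by (rule sum_per_window)
    also have "{1..<1 + int p} = {1..int p}" by auto
    finally show ?thesis .
  qed
  also have "?h * ?su * ?h * ?sv * (\<Sum>j\<in>{1..int p}. 1 / ?q j)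
      = (?h * (\<Sum>j\<in>{1..int p}. 1 / ?q j)) * (?h * ?su * ?sv)"
    by (simp add: ac_simps)
  also have "?h * (\<Sum>j\<in>{1..int p}. 1 / ?q j) = real p"
    using harmonic_mean_mult_sum_inverse[OF p] psi(2) unfolding psi0_eq_harmonic_mean by blast
  finally show ?thesis using p by simp
qed

lemma idx_mono_le:
  assumes mono: "\<forall>k\<in>{1..K}. idx k < idx (Suc k)"
  shows "1 \<le> k \<Longrightarrow> k \<le> k' \<Longrightarrow> k' \<le> Suc K \<Longrightarrow> (idx k :: int) \<le> idx k'"
proof (induction k')
  case (Suc k')
  show ?case
  proof (cases "k = Suc k'")
    case False
    then have k': "k \<le> k'" "k' \<in> {1..K}" using Suc.prems by auto
    then have "idx k \<le> idx k'" using Suc by simp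
    moreover have "idx k' < idx (Suc k')" using mono k' by blast
    ultimately show ?thesis by simp
  qed simp
qed simp

lemma psi0coll_on_block:
  assumes mono: "\<forall>k\<in>{1..K}. idx k < idx (Suc k)"
    and k: "k \<in> {1..K}" and i: "idx k \<le> i" "i < idx (Suc k)"
  shows "psi0coll p K idx psi icoll i = psi0 p psi (icoll k)"
proof -
  have "(THE k'. k' \<in> {1..K} \<and> idx k' \<le> i \<and> i < idx (Suc k')) = k"
  proof (rule the_equality)
    show "k \<in> {1..K} \<and> idx k \<le> i \<and> i < idx (Suc k)" using k i by simp
  next
    fix k' assume k': "k' \<in> {1..K} \<and> idx k' \<le> i \<and> i < idx (Suc k')"
    have False if "k < k'"
      using idx_mono_le[OF mono, of "Suc k" k'] that k k' i by auto
    moreover have False if "k' < k"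
      using idx_mono_le[OF mono, of "Suc k'" k] that k k' i by auto
    ultimately show "k' = k" by (metis linorder_neqE_nat)
  qed
  then show ?thesis by (simp add: psi0coll_def)
qed

lemma Dop_UH_per_on_block:
  assumes v: "UH_per eps N K idx v" and eps: "eps \<noteq> 0"
    and k: "k \<in> {1..K}" "idx k < idx (Suc k)" and i: "idx k \<le> i" "i < idx (Suc k)"
  shows "Dop eps v i = block_slope eps idx v k"
proof -
  obtain a b where ab: "\<forall>i\<in>{idx k..idx (Suc k)}. v i = a + b * (eps * of_int i)"
    using v k unfolding UH_per_def by blast
  have "Dop eps v i = b" using ab i eps by (simp add: Dop_def algebra_simps)
  moreover have "v (idx (Suc k)) - v (idx k) = b * (eps * of_int (idx (Suc k) - idx k))"
    using ab k(2) by (simp add: algebra_simps)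
  then have "block_slope eps idx v k = b" using k(2) eps by (simp add: block_slope_def)
  ultimately show ?thesis by simp
qed

lemma sum_over_blocks:
  assumes mono: "\<forall>k\<in>{1..K}. idx k < idx (Suc k)"
  shows "m \<le> K \<Longrightarrow> (\<Sum>k\<in>{1..m}. sum F {idx k..<idx (Suc k)}) = sum F {idx 1..<(idx (Suc m) :: int)}"
proof (induction m)
  case (Suc m)
  have "idx 1 \<le> idx (Suc m)" using idx_mono_le[OF mono, of 1 "Suc m"] Suc.prems by simp
  moreover have "idx (Suc m) \<le> idx (Suc (Suc m))" using mono Suc.prems by force
  ultimately have "{idx 1..<idx (Suc (Suc m))} = {idx 1..<idx (Suc m)} \<union> {idx (Suc m)..<idx (Suc (Suc m))}"
    by (simp add: ivl_disj_un_two(3))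
  then have "sum F {idx 1..<idx (Suc (Suc m))}
      = sum F {idx 1..<idx (Suc m)} + sum F {idx (Suc m)..<idx (Suc (Suc m))}"
    by (simp add: sum.union_disjoint ivl_disj_int_two(3))
  then show ?case using Suc by simp
qed simp

lemma sum_block_psi0coll:
  assumes mono: "\<forall>k\<in>{1..K}. idx k < idx (Suc k)" and eps: "eps \<noteq> 0" and k: "k \<in> {1..K}"
    and u: "UH_per eps N K idx u" and v: "UH_per eps N K idx v"
  shows "(\<Sum>i\<in>{idx k..<idx (Suc k)}. psi0coll p K idx psi icoll i * Dop eps u i * Dop eps v i)
    = of_int (idx (Suc k) - idx k) * (psi0 p psi (icoll k) * block_slope eps idx u k * block_slope eps idx v k)"
proof -
  have lt: "idx k < idx (Suc k)" using mono k by blast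
  have "(\<Sum>i\<in>{idx k..<idx (Suc k)}. psi0coll p K idx psi icoll i * Dop eps u i * Dop eps v i)
    = (\<Sum>i\<in>{idx k..<idx (Suc k)}. psi0 p psi (icoll k) * block_slope eps idx u k * block_slope eps idx v k)"
    using psi0coll_on_block[OF mono k] Dop_UH_per_on_block[OF u eps k lt]
      Dop_UH_per_on_block[OF v eps k lt] by (intro sum.cong) auto
  then show ?thesis using lt by simp
qed

lemma HQC_form_eq_ipX_psi0coll:
  assumes eps: "eps > 0" and p: "p > 0" and norm: "real N * eps = 1"
    and psi_per: "\<forall>i. per p (psi i)" and psi_pos: "\<forall>i j. psi i j > 0"
    and idx_first: "idx 1 = 1" and mono: "\<forall>k\<in>{1..K}. idx k < idx (Suc k)"
    and idx_last: "idx (Suc K) = int N + 1"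
    and u: "UH_per eps N K idx u" and v: "UH_per eps N K idx v"
  shows "HQC_form eps p K idx irep psi icoll u v
    = ipX N (\<lambda>i. psi0coll p K idx psi icoll i * Dop eps u i) (Dop eps v)"
proof -
  let ?F = "\<lambda>i. psi0coll p K idx psi icoll i * Dop eps u i * Dop eps v i"
  have "HQC_form eps p K idx irep psi icoll u v = eps * (\<Sum>k\<in>{1..K}. sum ?F {idx k..<idx (Suc k)})"
    unfolding HQC_form_def ip_rep_Rk[OF eps p psi_per psi_pos]
    using sum_block_psi0coll[OF mono _ _ u v] eps by (simp add: sum_distrib_left mult.assoc)
  also have "\<dots> = eps * sum ?F {1..int N}"
    using sum_over_blocks[OF mono, of K ?F] idx_first idx_last
    by (simp add: atLeastLessThanPlusOne_atLeastAtMost_int)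
  also have "\<dots> = ipX N (\<lambda>i. psi0coll p K idx psi icoll i * Dop eps u i) (Dop eps v)"
    using norm by (simp add: ipX_def eq_divide_eq mult.commute)
  finally show ?thesis .
qed

theorem lemma6p6:
  fixes eps :: real and N p K :: nat
    and idx irep icoll :: "nat \<Rightarrow> int"
    and psi :: "int \<Rightarrow> int \<Rightarrow> real"
    and f u :: "int \<Rightarrow> real"
  assumes eps_pos: "eps > 0" and N_pos: "N > 0" and p_pos: "p > 0"
    and norm: "real N * eps = 1"
    and psi_per: "\<forall>i j. psi (i + int N) j = psi i j \<and> psi i (j + int p) = psi i j"
    and A1: "\<exists>c C. 0 < c \<and> (\<forall>i j. c \<le> psi i j \<and> psi i j \<le> C)"
    and A2: "\<exists>C'. \<forall>i\<in>{1..int N}. \<forall>j\<in>{1..int p}. \<bar>(psi (i + 1) j - psi i j) / eps\<bar> \<le> C'"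
    and f_per: "per N f" and f_mean: "meanX N f = 0"
    and K_pos: "K \<ge> 1"
    and idx_first: "idx 1 = 1"
    and idx_mono: "\<forall>k\<in>{1..K}. idx k < idx (Suc k)"
    and idx_K: "idx K \<le> int N"
    and idx_last: "idx (Suc K) = int N + 1"
    and rep: "\<forall>k\<in>{1..K}. idx k \<le> irep k \<and> irep k + int p \<le> idx (Suc k)"
    and coll: "\<forall>k\<in>{1..K}. irep k \<le> icoll k \<and> icoll k < irep k + int p"
    and u_H: "UH_sharp eps N K idx u"
  shows "(\<forall>v. UH_sharp eps N K idx v \<longrightarrow> HQC_form eps p K idx irep psi icoll u v = ipX N f v)
     \<longleftrightarrow> (\<forall>v. UH_sharp eps N K idx v \<longrightarrow>
            ipX N (\<lambda>i. psi0coll p K idx psi icoll i * Dop eps u i) (Dop eps v) = ipX N f v)"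
proof -
  have psi_pos: "\<forall>i j. psi i j > 0" using A1 by (meson less_le_trans)
  have psi_per_Y: "\<forall>i. per p (psi i)" using psi_per by (simp add: per_def)
  have "HQC_form eps p K idx irep psi icoll u v
      = ipX N (\<lambda>i. psi0coll p K idx psi icoll i * Dop eps u i) (Dop eps v)"
    if "UH_sharp eps N K idx v" for v
    using HQC_form_eq_ipX_psi0coll[OF eps_pos p_pos norm psi_per_Y psi_pos idx_first idx_mono idx_last]
      u_H that by (simp add: UH_sharp_def)
  then show ?thesis by auto
qed

end
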